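(* Let $\mathcal{Q}\subseteq\mathbb{R}^n$ and consider the fully actuated robotic system $\mathbf{D}(\mathbf{q})\ddot{\mathbf{q}}+\mathbf{C}(\mathbf{q},\dot{\mathbf{q}})\dot{\mathbf{q}}+\mathbf{G}(\mathbf{q})=\mathbf{B}\mathbf{u}$ with $\mathbf{u}\in\mathbb{R}^m$, $m=n$ and $\mathbf{B}$ invertible. Let $h_0:\mathcal{Q}\to\mathbb{R}$ be continuously differentiable and suppose there exist a continuously differentiable $\mathbf{k}_0:\mathcal{Q}\to\mathbb{R}^n$ and an extended class $\mathcal{K}_\infty$ function $\alpha$ with $\nabla h_0(\mathbf{q})\cdot\mathbf{k}_0(\mathbf{q})>-\alpha(h_0(\mathbf{q}))$ for all $\mathbf{q}\in\mathcal{Q}$. For $\mu>0$ let $$h(\mathbf{q},\dot{\mathbf{q}})=h_0(\mathbf{q})-\frac{1}{2\mu}(\dot{\mathbf{q}}-\mathbf{k}_0(\mathbf{q}))^\top\mathbf{D}(\mathbf{q})(\dot{\mathbf{q}}-\mathbf{k}_0(\mathbf{q})),\qquad \mathcal{C}=\{(\mathbf{q},\dot{\mathbf{q}})\in T\mathcal{Q}:h(\mathbf{q},\dot{\mathbf{q}})\ge0\}.$$ Then $h$ is an energy-based control barrier function for the robotic system on $\mathcal{C}$.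
   Context: $\mathbf{D}(\mathbf{q})$ is the positive definite inertia matrix, $\mathbf{C}$ the Coriolis matrix, $\mathbf{G}$ the gravity term, $\mathbf{B}$ the actuation matrix. An extended class $\mathcal{K}_\infty$ function is a continuous, strictly increasing $\alpha:\mathbb{R}\to\mathbb{R}$ with $\alpha(0)=0$ and $\alpha(s)\to\pm\infty$ as $s\to\pm\infty$. Energy-based CBF: the function $h$ above (with $\mathbf{k}_0$ continuously differentiable) defining $\mathcal{C}$ is an energy-based control barrier function for the robotic system on $\mathcal{C}$ if there exists an extended class $\mathcal{K}_\infty$ function $\alpha$ such that for all $(\mathbf{q},\dot{\mathbf{q}})\in T\mathcal{Q}$, $$\sup_{\mathbf{u}\in\mathbb{R}^m}\Big\{\tfrac{1}{\mu}(\dot{\mathbf{q}}-\mathbf{k}_0(\mathbf{q}))^\top\Big[\mathbf{D}(\mathbf{q})\tfrac{\partial\mathbf{k}_0}{\partial\mathbf{q}}(\mathbf{q})\dot{\mathbf{q}}+\mathbf{C}(\mathbf{q},\dot{\mathbf{q}})\mathbf{k}_0(\mathbf{q})+\mathbf{G}(\mathbf{q})-\mathbf{B}\mathbf{u}\Big]+\nabla h_0(\mathbf{q})\cdot\dot{\mathbf{q}}\Big\}>-\alpha(h(\mathbf{q},\dot{\mathbf{q}})).$$ *)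

theory Defs
  imports "HOL-Analysis.Analysis"
begin

definition ext_class_Kinf :: "(real \<Rightarrow> real) \<Rightarrow> bool" where
  "ext_class_Kinf \<alpha> \<longleftrightarrow> continuous_on UNIV \<alpha> \<and> strict_mono \<alpha> \<and> \<alpha> 0 = 0
     \<and> filterlim \<alpha> at_top at_top \<and> filterlim \<alpha> at_bot at_bot"

definition grad :: "(real^'n \<Rightarrow> real) \<Rightarrow> real^'n \<Rightarrow> real^'n" where
  "grad f q = (\<chi> i. frechet_derivative f (at q) (axis i 1))"

definition jac :: "(real^'n \<Rightarrow> real^'n) \<Rightarrow> real^'n \<Rightarrow> real^'n^'n" where
  "jac f q = matrix (frechet_derivative f (at q))"

definition C1_on :: "'a::euclidean_space set \<Rightarrow> ('a \<Rightarrow> 'b::euclidean_space) \<Rightarrow> bool" where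
  "C1_on S f \<longleftrightarrow> (\<forall>x\<in>S. f differentiable (at x))
      \<and> continuous_on S (\<lambda>x. frechet_derivative f (at x))"

definition hE :: "(real^'n \<Rightarrow> real^'n^'n) \<Rightarrow> (real^'n \<Rightarrow> real) \<Rightarrow> (real^'n \<Rightarrow> real^'n)
    \<Rightarrow> real \<Rightarrow> real^'n \<Rightarrow> real^'n \<Rightarrow> real" where
  "hE D h0 k0 \<mu> q qd = h0 q - 1 / (2 * \<mu>) * ((qd - k0 q) \<bullet> (D q *v (qd - k0 q)))"

text \<open>Energy-based CBF for D(q) qdd + C(q,qd) qd + G(q) = B u, with TQ = Q x R^n
  and u ranging over R^m (here m = n). The supremum is taken in the extended reals.\<close>
definition energy_CBF ::
  "(real^'n) set \<Rightarrow> (real^'n \<Rightarrow> real^'n^'n) \<Rightarrow> (real^'n \<Rightarrow> real^'n \<Rightarrow> real^'n^'n)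
   \<Rightarrow> (real^'n \<Rightarrow> real^'n) \<Rightarrow> real^'m^'n \<Rightarrow> (real^'n \<Rightarrow> real) \<Rightarrow> (real^'n \<Rightarrow> real^'n)
   \<Rightarrow> real \<Rightarrow> bool" where
  "energy_CBF Q D C G B h0 k0 \<mu> \<longleftrightarrow>
     (\<exists>\<alpha>. ext_class_Kinf \<alpha> \<and>
       (\<forall>q\<in>Q. \<forall>qd::real^'n.
          (SUP u::real^'m. ereal (
             (1 / \<mu>) * ((qd - k0 q) \<bullet>
                 (D q *v (jac k0 q *v qd) + C q qd *v k0 q + G q - B *v u))
             + grad h0 q \<bullet> qd))
          > ereal (- \<alpha> (hE D h0 k0 \<mu> q qd))))"

end

theory Submission
  imports Defs
begin

text \<open>The control enters the barrier condition only through the term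
  \<open>-(1/\<mu>) (qd - k0 q) \<bullet> (B u)\<close>, which is affine in \<open>u\<close>. Since \<open>B\<close> is invertible,
  \<open>B u\<close> can point anywhere, so the supremum over \<open>u\<close> is \<open>\<infinity>\<close> whenever
  \<open>qd \<noteq> k0 q\<close>. If \<open>qd = k0 q\<close>, the objective no longer depends on \<open>u\<close>, the kinetic
  term of \<open>h\<close> vanishes, and the condition reduces to the nominal inequality
  \<open>\<nabla>h0(q) \<bullet> k0(q) > -\<alpha>(h0 q)\<close>. The condition is pointwise.\<close>

lemma SUP_affine_inner_surj_eq_infinity:
  fixes L :: "'a \<Rightarrow> 'b::real_inner"
  assumes "surj L" and "e \<noteq> 0" and "a \<noteq> 0"
  shows "(SUP u. ereal (K - a * (e \<bullet> L u))) = \<infinity>"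
proof -
  have unbounded: "\<exists>u. r < K - a * (e \<bullet> L u)" for r
  proof -
    define t where "t = - (\<bar>r - K\<bar> + 1) / (a * (e \<bullet> e))"
    obtain u where u: "L u = t *\<^sub>R e"
      using \<open>surj L\<close> by (metis surjD)
    have "a * (e \<bullet> L u) = - (\<bar>r - K\<bar> + 1)"
      using assms(2,3) by (simp add: u t_def)
    then show ?thesis by (intro exI[of _ u]) linarith
  qed
  show ?thesis
    unfolding top_ereal_def[symmetric] SUP_eq_top_iff
  proof (intro allI impI)
    fix x :: ereal
    assume "x < top"
    then obtain r where "x \<le> ereal r"
      by (cases x) auto
    moreover obtain u where "r < K - a * (e \<bullet> L u)"
      using unbounded by blast
    ultimately have "x < ereal (K - a * (e \<bullet> L u))"
      by (simp add: le_less_trans)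
    then show "\<exists>u\<in>UNIV. x < ereal (K - a * (e \<bullet> L u))"
      by blast
  qed
qed

lemma invertible_imp_surj_matrix_vector_mult:
  fixes B :: "'a::field^'n^'n"
  assumes "invertible B"
  shows "surj ((*v) B)"
  using assms matrix_right_invertible_surjective unfolding invertible_def by blast

theorem lemma5:
  fixes Q :: "(real^'n) set"
    and D :: "real^'n \<Rightarrow> real^'n^'n"
    and C :: "real^'n \<Rightarrow> real^'n \<Rightarrow> real^'n^'n"
    and G :: "real^'n \<Rightarrow> real^'n"
    and B :: "real^'n^'n"
    and h0 :: "real^'n \<Rightarrow> real"
    and k0 :: "real^'n \<Rightarrow> real^'n"
    and \<alpha> :: "real \<Rightarrow> real"
    and \<mu> :: real
  assumes Q_open: "open Q"
    and D_sym: "\<forall>q\<in>Q. transpose (D q) = D q"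
    and D_pd: "\<forall>q\<in>Q. \<forall>x. x \<noteq> 0 \<longrightarrow> x \<bullet> (D q *v x) > 0"
    and B_inv: "invertible B"
    and h0_C1: "C1_on Q h0"
    and k0_C1: "C1_on Q k0"
    and alpha: "ext_class_Kinf \<alpha>"
    and nominal: "\<forall>q\<in>Q. grad h0 q \<bullet> k0 q > - \<alpha> (h0 q)"
    and mu_pos: "\<mu> > 0"
  shows "energy_CBF Q D C G B h0 k0 \<mu>"
  unfolding energy_CBF_def
proof (intro exI[of _ \<alpha>] conjI alpha ballI allI)
  fix q qd
  assume "q \<in> Q"
  define e where "e = qd - k0 q"
  define K where
    "K = (1 / \<mu>) * (e \<bullet> (D q *v (jac k0 q *v qd) + C q qd *v k0 q + G q)) + grad h0 q \<bullet> qd"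
  have objective: "(1 / \<mu>) * ((qd - k0 q) \<bullet> (D q *v (jac k0 q *v qd) + C q qd *v k0 q + G q - B *v u))
      + grad h0 q \<bullet> qd = K - (1 / \<mu>) * (e \<bullet> (B *v u))" for u
    unfolding K_def e_def by (simp add: inner_diff_right algebra_simps)
  have "ereal (- \<alpha> (hE D h0 k0 \<mu> q qd)) < (SUP u. ereal (K - (1 / \<mu>) * (e \<bullet> (B *v u))))"
  proof (cases "e = 0")
    case True
    then have "qd = k0 q" and "hE D h0 k0 \<mu> q qd = h0 q"
      by (simp_all add: e_def hE_def)
    then have "- \<alpha> (hE D h0 k0 \<mu> q qd) < K"
      using nominal \<open>q \<in> Q\<close> True by (simp add: K_def)
    then show ?thesis
      by (simp add: less_SUP_iff True)
  next
    case False
    have "(SUP u. ereal (K - (1 / \<mu>) * (e \<bullet> (B *v u)))) = \<infinity>"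
      using invertible_imp_surj_matrix_vector_mult[OF B_inv] False mu_pos
      by (intro SUP_affine_inner_surj_eq_infinity) auto
    then show ?thesis
      by simp
  qed
  then show "(SUP u. ereal ((1 / \<mu>) * ((qd - k0 q) \<bullet>
             (D q *v (jac k0 q *v qd) + C q qd *v k0 q + G q - B *v u)) + grad h0 q \<bullet> qd))
      > ereal (- \<alpha> (hE D h0 k0 \<mu> q qd))"
    by (simp only: objective)
qed

end
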